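(* For all positive integers $d$ and $k$ there exists a triangulation $T$ of the sphere $S^d$ such that $\Delta_{0,1}(T) \leq (d+1)(d^2+d+2)$, $|V(T)| = (d^2+d+1)k + (d+2)^2$, and $T$ has $k$ $d$-dimensional faces which are pairwise vertex-disjoint and nonadjacent. Consequently, for every $d$ there exists $L$ such that for every $k$ there is a triangulation $T$ of $S^d$ with $\Delta(T) \leq L$ and $|V(T)| \leq Lk$ which has $k$ $d$-dimensional faces $t_1,\dots,t_k$ that are pairwise vertex-disjoint and nonadjacent.
   Context: For a finite simplicial complex $X$, $\mathrm{skel}_k(X)$ is the set of $k$-dimensional faces, $\Delta_{i,j}(X) = \max_{\sigma \in \mathrm{skel}_i(X)} |\{\tau \in \mathrm{skel}_j(X) : \sigma \subseteq \tau\}|$, and $\Delta(X) = \max_{i,j}\Delta_{i,j}(X)$. Two faces are nonadjacent if there is no edge between a vertex of one and a vertex of the other. *)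

theory Defs
  imports "HOL-Analysis.Analysis"
begin

definition simplicial_complex :: "nat set set \<Rightarrow> bool" where
  "simplicial_complex X \<longleftrightarrow> finite X \<and>
     (\<forall>\<sigma>\<in>X. finite \<sigma> \<and> \<sigma> \<noteq> {}) \<and>
     (\<forall>\<sigma>\<in>X. \<forall>\<tau>. \<tau> \<subseteq> \<sigma> \<and> \<tau> \<noteq> {} \<longrightarrow> \<tau> \<in> X)"

definition vertices :: "nat set set \<Rightarrow> nat set" where
  "vertices X = \<Union>X"

definition skel :: "nat \<Rightarrow> nat set set \<Rightarrow> nat set set" where
  "skel k X = {\<sigma>\<in>X. card \<sigma> = k + 1}"

definition Delta_ij :: "nat \<Rightarrow> nat \<Rightarrow> nat set set \<Rightarrow> nat" where
  "Delta_ij i j X = Max (insert 0 ((\<lambda>\<sigma>. card {\<tau>\<in>skel j X. \<sigma> \<subseteq> \<tau>}) ` skel i X))"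

text \<open>Delta(X) = max over all i, j; indices beyond the number of vertices contribute 0.\<close>
definition Delta :: "nat set set \<Rightarrow> nat" where
  "Delta X = Max ((\<lambda>(i,j). Delta_ij i j X) ` ({..card (vertices X)} \<times> {..card (vertices X)}))"

text \<open>Geometric realization |X| inside the space nat \<Rightarrow> real (product topology; since
 only finitely many coordinates are used this is the usual Euclidean topology):
 barycentric coordinate functions supported on a face.\<close>
definition realization :: "nat set set \<Rightarrow> (nat \<Rightarrow> real) set" where
  "realization X = {f. \<exists>\<sigma>\<in>X. (\<forall>v. f v \<ge> 0) \<and> (\<forall>v. v \<notin> \<sigma> \<longrightarrow> f v = 0) \<and> (\<Sum>v\<in>\<sigma>. f v) = 1}"

text \<open>T is a triangulation of the d-sphere, d+1 = CARD('n), i.e. of the unit sphere in real^'n.\<close>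
definition triangulates_sphere :: "nat set set \<Rightarrow> ('n::finite) itself \<Rightarrow> bool" where
  "triangulates_sphere T _ \<longleftrightarrow> simplicial_complex T \<and>
     realization T homeomorphic (sphere (0 :: real ^ 'n) 1)"

definition nonadjacent :: "nat set set \<Rightarrow> nat set \<Rightarrow> nat set \<Rightarrow> bool" where
  "nonadjacent X \<sigma> \<tau> \<longleftrightarrow> (\<forall>u\<in>\<sigma>. \<forall>v\<in>\<tau>. {u, v} \<notin> skel 1 X)"

definition has_separated_facets :: "nat set set \<Rightarrow> nat \<Rightarrow> nat \<Rightarrow> bool" where
  "has_separated_facets X d k \<longleftrightarrow> (\<exists>t :: nat \<Rightarrow> nat set.
     (\<forall>i<k. t i \<in> skel d X) \<and>
     (\<forall>i<k. \<forall>j<k. i \<noteq> j \<longrightarrow> t i \<inter> t j = {} \<and> nonadjacent X (t i) (t j)))"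

end

theory Submission
  imports Defs
begin

text \<open>Write \<open>n = d + 1\<close>. Start from the boundary of the \<open>n\<close>-dimensional cross-polytope on
  the vertices \<open>0, \<dots>, 2n - 1\<close>, which is the \<open>\<ell>\<^sub>1\<close> unit sphere, and apply stellar
  subdivisions one after another: step \<open>m\<close> cones off the facet \<open>{n+m, \<dots>, 2n+m-1}\<close> from
  a new vertex \<open>2n+m\<close>, which produces the next facet of the same shape. A stellar
  subdivision does not change the homeomorphism type of the realization, and every face
  of the resulting complexes lies in \<open>{0, \<dots>, 2n-1}\<close> or in a window \<open>{a, \<dots>, a+n}\<close>, so all
  degrees are bounded independently of the number of steps. Facets created at steps
  \<open>d\<^sup>2 + d + 1\<close> apart are then too far apart to be joined by an edge; for \<open>d = 1\<close>, where
  the windows are too wide for this, one uses that each subdivided edge disappears.\<close>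

lemma continuous_on_coordinate [continuous_intros]:
  "continuous_on S (\<lambda>f. f i :: 'b::topological_space)"
  by (rule continuous_on_subset[OF continuous_on_product_coordinates]) simp

lemma continuous_on_Min_coordinates:
  assumes "finite A" "A \<noteq> {}"
  shows "continuous_on S (\<lambda>f::nat \<Rightarrow> real. Min (f ` A))"
  using assms
proof (induction A rule: finite_ne_induct)
  case (insert x F)
  then show ?case
    by (simp add: continuous_on_min continuous_on_coordinate)
qed (simp add: continuous_on_coordinate)

section \<open>Stellar subdivision\<close>

definition is_facet :: "nat set set \<Rightarrow> nat set \<Rightarrow> bool" where
  "is_facet X \<sigma> \<longleftrightarrow> \<sigma> \<in> X \<and> (\<forall>\<tau>\<in>X. \<sigma> \<subseteq> \<tau> \<longrightarrow> \<tau> = \<sigma>)"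

definition stellar_subdivision :: "nat set set \<Rightarrow> nat set \<Rightarrow> nat \<Rightarrow> nat set set" where
  "stellar_subdivision X \<sigma> w = (X - {\<sigma>}) \<union> insert w ` {\<rho>. \<rho> \<subset> \<sigma>}"

lemma mem_stellar_subdivision:
  "\<tau> \<in> stellar_subdivision X \<sigma> w \<longleftrightarrow> \<tau> \<in> X \<and> \<tau> \<noteq> \<sigma> \<or> (\<exists>\<rho>\<subset>\<sigma>. \<tau> = insert w \<rho>)"
  by (auto simp: stellar_subdivision_def)

lemma simplicial_complex_stellar_subdivision:
  assumes X: "simplicial_complex X" and \<sigma>: "is_facet X \<sigma>"
  shows "simplicial_complex (stellar_subdivision X \<sigma> w)"
proof -
  have "finite \<sigma>" using X \<sigma> by (auto simp: simplicial_complex_def is_facet_def)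
  then have "finite (insert w ` {\<rho>. \<rho> \<subset> \<sigma>})"
    by (auto intro: finite_subset[of _ "Pow \<sigma>"])
  then have "finite (stellar_subdivision X \<sigma> w)"
    using X by (simp add: stellar_subdivision_def simplicial_complex_def)
  moreover have "finite \<tau> \<and> \<tau> \<noteq> {}" if \<tau>: "\<tau> \<in> stellar_subdivision X \<sigma> w" for \<tau>
  proof (cases "\<tau> \<in> X")
    case True
    then show ?thesis using X by (simp add: simplicial_complex_def)
  next
    case False
    then obtain \<rho> where "\<rho> \<subset> \<sigma>" "\<tau> = insert w \<rho>"
      using \<tau> by (auto simp: mem_stellar_subdivision)
    moreover have "finite \<rho>" using \<open>finite \<sigma>\<close> \<open>\<rho> \<subset> \<sigma>\<close> by (meson psubset_imp_subset rev_finite_subset)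
    ultimately show ?thesis by simp
  qed
  moreover have "\<rho> \<in> stellar_subdivision X \<sigma> w"
    if \<tau>: "\<tau> \<in> stellar_subdivision X \<sigma> w" and \<rho>: "\<rho> \<subseteq> \<tau>" "\<rho> \<noteq> {}" for \<tau> \<rho>
  proof (cases "\<tau> \<in> X \<and> \<tau> \<noteq> \<sigma>")
    case True
    then have "\<rho> \<in> X" using X \<rho> unfolding simplicial_complex_def by blast
    moreover have "\<rho> \<noteq> \<sigma>" using \<sigma> True \<rho> unfolding is_facet_def by blast
    ultimately show ?thesis by (simp add: mem_stellar_subdivision)
  next
    case False
    then obtain \<alpha> where \<alpha>: "\<alpha> \<subset> \<sigma>" "\<tau> = insert w \<alpha>"
      using \<tau> by (auto simp: mem_stellar_subdivision)
    show ?thesis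
    proof (cases "w \<in> \<rho>")
      case True
      then have "\<rho> = insert w (\<rho> - {w})" "\<rho> - {w} \<subset> \<sigma>" using \<alpha> \<rho> by auto
      then show ?thesis unfolding mem_stellar_subdivision by blast
    next
      case False
      then have "\<rho> \<subset> \<sigma>" using \<alpha> \<rho> by auto
      then have "\<rho> \<in> X" "\<rho> \<noteq> \<sigma>"
        using X \<sigma> \<rho>(2) unfolding simplicial_complex_def is_facet_def by blast+
      then show ?thesis by (simp add: mem_stellar_subdivision)
    qed
  qed
  ultimately show ?thesis unfolding simplicial_complex_def by blast
qed

lemma vertices_stellar_subdivision:
  assumes "\<sigma> \<in> X" "2 \<le> card \<sigma>"
  shows "vertices (stellar_subdivision X \<sigma> w) = insert w (vertices X)"
proof
  show "vertices (stellar_subdivision X \<sigma> w) \<subseteq> insert w (vertices X)"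
    using assms(1) by (auto simp: vertices_def stellar_subdivision_def)
  have "{w} \<in> stellar_subdivision X \<sigma> w"
    using assms(2) by (auto simp: mem_stellar_subdivision)
  moreover have "v \<in> vertices (stellar_subdivision X \<sigma> w)" if "v \<in> \<tau>" "\<tau> \<in> X" for v \<tau>
  proof (cases "\<tau> = \<sigma>")
    case True
    with that assms(2) have "{v} \<subset> \<sigma>" by auto
    then have "{w, v} \<in> stellar_subdivision X \<sigma> w" unfolding mem_stellar_subdivision by blast
    then show ?thesis by (auto simp: vertices_def)
  qed (use that in \<open>auto simp: vertices_def mem_stellar_subdivision\<close>)
  ultimately show "insert w (vertices X) \<subseteq> vertices (stellar_subdivision X \<sigma> w)"
    by (auto simp: vertices_def)
qed

text \<open>Mutually inverse maps between the realizations of a stellar subdivision and of the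
  original complex: \<open>stellar_flatten\<close> spreads the weight of the cone point \<open>w\<close> evenly over
  \<open>\<sigma>\<close>, and \<open>stellar_raise\<close> moves the common part \<open>Min (f ` \<sigma>)\<close> of the
  \<open>\<sigma>\<close>-coordinates onto \<open>w\<close>.\<close>

definition stellar_flatten :: "nat set \<Rightarrow> nat \<Rightarrow> (nat \<Rightarrow> real) \<Rightarrow> nat \<Rightarrow> real" where
  "stellar_flatten \<sigma> w f =
     (\<lambda>v. if v = w then 0 else if v \<in> \<sigma> then f v + f w / real (card \<sigma>) else f v)"

definition stellar_raise :: "nat set \<Rightarrow> nat \<Rightarrow> (nat \<Rightarrow> real) \<Rightarrow> nat \<Rightarrow> real" where
  "stellar_raise \<sigma> w f =
     (\<lambda>v. if v = w then real (card \<sigma>) * Min (f ` \<sigma>)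
          else if v \<in> \<sigma> then f v - Min (f ` \<sigma>) else f v)"

lemma continuous_on_stellar_flatten:
  assumes "finite \<sigma>" "\<sigma> \<noteq> {}"
  shows "continuous_on S (stellar_flatten \<sigma> w)"
proof (rule continuous_on_coordinatewise_then_product)
  fix v show "continuous_on S (\<lambda>f. stellar_flatten \<sigma> w f v)"
    using assms by (cases "v = w"; cases "v \<in> \<sigma>") (auto simp: stellar_flatten_def intro!: continuous_intros)
qed

lemma continuous_on_stellar_raise:
  assumes "finite \<sigma>" "\<sigma> \<noteq> {}"
  shows "continuous_on S (stellar_raise \<sigma> w)"
proof (rule continuous_on_coordinatewise_then_product)
  fix v show "continuous_on S (\<lambda>f. stellar_raise \<sigma> w f v)"
    using assms by (cases "v = w"; cases "v \<in> \<sigma>")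
      (auto simp: stellar_raise_def intro!: continuous_intros continuous_on_Min_coordinates)
qed

context
  fixes X :: "nat set set" and \<sigma> :: "nat set" and w :: nat
  assumes X: "simplicial_complex X" and \<sigma>: "is_facet X \<sigma>" and w: "w \<notin> vertices X"
begin

lemma stellar_facet_finite: "finite \<sigma>" and stellar_facet_nonempty: "\<sigma> \<noteq> {}"
  using X \<sigma> by (auto simp: simplicial_complex_def is_facet_def)

lemma stellar_apex_notin: "\<tau> \<in> X \<Longrightarrow> w \<notin> \<tau>"
  using w by (auto simp: vertices_def)

lemma stellar_raise_eq_self:
  assumes \<tau>: "\<tau> \<in> X" "\<not> \<sigma> \<subseteq> \<tau>" and f: "\<forall>v. 0 \<le> f v" "\<forall>v. v \<notin> \<tau> \<longrightarrow> f v = 0"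
  shows "stellar_raise \<sigma> w f = f"
proof -
  obtain x where "x \<in> \<sigma>" "x \<notin> \<tau>" using \<tau> by blast
  then have "Min (f ` \<sigma>) \<le> f x" "f x = 0" using stellar_facet_finite f by auto
  then have "Min (f ` \<sigma>) \<le> 0" by simp
  moreover have "0 \<le> Min (f ` \<sigma>)" using stellar_facet_finite stellar_facet_nonempty f by auto
  ultimately show ?thesis
    using f stellar_apex_notin[OF \<tau>(1)] by (auto simp: stellar_raise_def)
qed

lemma stellar_raise_mem_realization:
  assumes "f \<in> realization X"
  shows "stellar_raise \<sigma> w f \<in> realization (stellar_subdivision X \<sigma> w)"
proof -
  obtain \<tau> where \<tau>: "\<tau> \<in> X" and f: "\<forall>v. 0 \<le> f v" "\<forall>v. v \<notin> \<tau> \<longrightarrow> f v = 0" "sum f \<tau> = 1"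
    using assms by (auto simp: realization_def)
  show ?thesis
  proof (cases "\<sigma> \<subseteq> \<tau>")
    case False
    then have "\<tau> \<in> stellar_subdivision X \<sigma> w" using \<tau> by (auto simp: mem_stellar_subdivision)
    then show ?thesis
      using stellar_raise_eq_self[OF \<tau> False f(1,2)] f by (auto simp: realization_def)
  next
    case True
    then have "\<tau> = \<sigma>" using \<sigma> \<tau> by (auto simp: is_facet_def)
    define \<mu> where "\<mu> = Min (f ` \<sigma>)"
    have "\<mu> \<in> f ` \<sigma>"
      unfolding \<mu>_def using stellar_facet_finite stellar_facet_nonempty by (intro Min_in) auto
    then obtain x where x: "x \<in> \<sigma>" "f x = \<mu>" by auto
    \<comment> \<open>the raised coordinate of \<open>x\<close> vanishes, so the image lies on \<open>insert w (\<sigma> - {x})\<close>\<close>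
    have \<mu>_le: "\<mu> \<le> f v" if "v \<in> \<sigma>" for v using that stellar_facet_finite by (simp add: \<mu>_def)
    have w\<sigma>: "w \<notin> \<sigma>" using stellar_apex_notin \<sigma> by (auto simp: is_facet_def)
    have "sum (stellar_raise \<sigma> w f) (insert w (\<sigma> - {x}))
        = real (card \<sigma>) * \<mu> + sum (stellar_raise \<sigma> w f) (\<sigma> - {x})"
      using w\<sigma> stellar_facet_finite by (simp add: stellar_raise_def \<mu>_def)
    also have "sum (stellar_raise \<sigma> w f) (\<sigma> - {x}) = (\<Sum>v\<in>\<sigma> - {x}. f v - \<mu>)"
      using w\<sigma> by (intro sum.cong) (auto simp: stellar_raise_def \<mu>_def)
    also have "\<dots> = (\<Sum>v\<in>\<sigma>. f v - \<mu>)"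
      using x stellar_facet_finite by (simp add: sum_diff1)
    also have "\<dots> = 1 - real (card \<sigma>) * \<mu>"
      using f(3) \<open>\<tau> = \<sigma>\<close> by (simp add: sum_subtractf)
    finally have "sum (stellar_raise \<sigma> w f) (insert w (\<sigma> - {x})) = 1" by simp
    moreover have "insert w (\<sigma> - {x}) \<in> stellar_subdivision X \<sigma> w"
      using x unfolding mem_stellar_subdivision by blast
    moreover have "\<forall>v. 0 \<le> stellar_raise \<sigma> w f v"
      using \<mu>_le x f(1) by (auto simp: stellar_raise_def \<mu>_def[symmetric])
    moreover have "\<forall>v. v \<notin> insert w (\<sigma> - {x}) \<longrightarrow> stellar_raise \<sigma> w f v = 0"
      using x f(2) \<open>\<tau> = \<sigma>\<close> by (auto simp: stellar_raise_def \<mu>_def[symmetric])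
    ultimately show ?thesis unfolding realization_def by blast
  qed
qed

lemma stellar_flatten_on_cone:
  assumes \<rho>: "\<rho> \<subset> \<sigma>" and f: "\<forall>v. 0 \<le> f v" "\<forall>v. v \<notin> insert w \<rho> \<longrightarrow> f v = 0"
    "sum f (insert w \<rho>) = 1"
  shows "stellar_flatten \<sigma> w f \<in> realization X \<and> stellar_raise \<sigma> w (stellar_flatten \<sigma> w f) = f"
proof -
  define c where "c = real (card \<sigma>)"
  have c: "0 < c" using stellar_facet_finite stellar_facet_nonempty by (simp add: c_def card_gt_0_iff)
  have w\<sigma>: "w \<notin> \<sigma>" using stellar_apex_notin \<sigma> by (auto simp: is_facet_def)
  obtain x where x: "x \<in> \<sigma>" "x \<notin> \<rho>" using \<rho> by blast
  have "finite \<rho>" using \<rho> stellar_facet_finite finite_subset by auto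
  have "sum f \<sigma> = sum f \<rho>"
    using \<rho> f(2) stellar_facet_finite w\<sigma> by (intro sum.mono_neutral_right) auto
  moreover have "w \<notin> \<rho>" using \<rho> w\<sigma> by auto
  ultimately have "sum f \<sigma> + f w = 1"
    using f(3) \<open>finite \<rho>\<close> by simp
  have "sum (stellar_flatten \<sigma> w f) \<sigma> = (\<Sum>v\<in>\<sigma>. f v + f w / c)"
    using w\<sigma> by (intro sum.cong) (auto simp: stellar_flatten_def c_def)
  also have "\<dots> = sum f \<sigma> + f w" using c by (simp add: sum.distrib c_def)
  finally have "sum (stellar_flatten \<sigma> w f) \<sigma> = 1" using \<open>sum f \<sigma> + f w = 1\<close> by simp
  moreover have "\<forall>v. 0 \<le> stellar_flatten \<sigma> w f v"
    using f(1) c by (simp add: stellar_flatten_def c_def[symmetric])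
  moreover have "\<forall>v. v \<notin> \<sigma> \<longrightarrow> stellar_flatten \<sigma> w f v = 0"
    using f(2) \<rho> by (auto simp: stellar_flatten_def)
  ultimately have flat: "stellar_flatten \<sigma> w f \<in> realization X"
    using \<sigma> unfolding realization_def is_facet_def by blast
  have "Min ((\<lambda>v. f v + f w / c) ` \<sigma>) = f w / c"
    using stellar_facet_finite f x w\<sigma> by (intro Min_eqI) (auto intro!: image_eqI[of _ _ x])
  moreover have "stellar_flatten \<sigma> w f ` \<sigma> = (\<lambda>v. f v + f w / c) ` \<sigma>"
    using w\<sigma> by (intro image_cong) (auto simp: stellar_flatten_def c_def)
  ultimately have "Min (stellar_flatten \<sigma> w f ` \<sigma>) = f w / c" by simp
  then have "stellar_raise \<sigma> w (stellar_flatten \<sigma> w f) = f"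
    using c f(2) \<rho> w\<sigma> by (auto simp: stellar_raise_def stellar_flatten_def c_def[symmetric])
  with flat show ?thesis by blast
qed

lemma stellar_flatten_mem_realization:
  assumes "f \<in> realization (stellar_subdivision X \<sigma> w)"
  shows "stellar_flatten \<sigma> w f \<in> realization X \<and> stellar_raise \<sigma> w (stellar_flatten \<sigma> w f) = f"
proof -
  obtain \<tau> where \<tau>: "\<tau> \<in> stellar_subdivision X \<sigma> w"
    and f: "\<forall>v. 0 \<le> f v" "\<forall>v. v \<notin> \<tau> \<longrightarrow> f v = 0" "sum f \<tau> = 1"
    using assms by (auto simp: realization_def)
  show ?thesis
  proof (cases "\<tau> \<in> X \<and> \<tau> \<noteq> \<sigma>")
    case True
    then have "stellar_flatten \<sigma> w f = f"
      using f(2) stellar_apex_notin by (auto simp: stellar_flatten_def)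
    moreover have "\<not> \<sigma> \<subseteq> \<tau>" using True \<sigma> by (auto simp: is_facet_def)
    ultimately show ?thesis
      using True f stellar_raise_eq_self[of \<tau> f] by (auto simp: realization_def)
  next
    case False
    then obtain \<rho> where "\<rho> \<subset> \<sigma>" "\<tau> = insert w \<rho>" using \<tau> by (auto simp: mem_stellar_subdivision)
    then show ?thesis using stellar_flatten_on_cone f by blast
  qed
qed

lemma stellar_flatten_raise:
  assumes "f \<in> realization X"
  shows "stellar_flatten \<sigma> w (stellar_raise \<sigma> w f) = f"
proof -
  have "f w = 0" using assms stellar_apex_notin by (auto simp: realization_def)
  moreover have "w \<notin> \<sigma>" using stellar_apex_notin \<sigma> by (auto simp: is_facet_def)
  moreover have "0 < real (card \<sigma>)"
    using stellar_facet_finite stellar_facet_nonempty by (simp add: card_gt_0_iff)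
  ultimately show ?thesis by (auto simp: stellar_flatten_def stellar_raise_def)
qed

lemma realization_stellar_subdivision_homeomorphic:
  "realization (stellar_subdivision X \<sigma> w) homeomorphic realization X"
proof -
  have "homeomorphism (realization (stellar_subdivision X \<sigma> w)) (realization X)
          (stellar_flatten \<sigma> w) (stellar_raise \<sigma> w)"
    by (rule homeomorphismI)
      (use stellar_flatten_mem_realization stellar_raise_mem_realization stellar_flatten_raise
           stellar_facet_finite stellar_facet_nonempty
        in \<open>auto intro: continuous_on_stellar_flatten continuous_on_stellar_raise\<close>)
  then show ?thesis unfolding homeomorphic_def by blast
qed

end


section \<open>The cross-polytope\<close>

lemma level_set_homeomorphic_sphere:
  fixes p :: "'a::real_normed_vector \<Rightarrow> real"
  assumes cont: "continuous_on UNIV p"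
    and homogeneous: "\<And>c x. 0 \<le> c \<Longrightarrow> p (c *\<^sub>R x) = c * p x"
    and pos: "\<And>x. x \<noteq> 0 \<Longrightarrow> 0 < p x"
  shows "{x. p x = 1} homeomorphic sphere (0::'a) 1"
proof -
  have nonzero: "x \<noteq> 0" if "p x = 1" for x
    using that homogeneous[of 0 0] by auto
  have sphere_pos: "0 < p y" if "y \<in> sphere 0 1" for y
    using that by (intro pos) auto
  have "homeomorphism {x. p x = 1} (sphere 0 1) (\<lambda>x. x /\<^sub>R norm x) (\<lambda>y. y /\<^sub>R p y)"
  proof (rule homeomorphismI)
    show "continuous_on {x. p x = 1} (\<lambda>x. x /\<^sub>R norm x)"
      using nonzero by (intro continuous_intros) auto
    show "continuous_on (sphere 0 1) (\<lambda>y. y /\<^sub>R p y)"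
      using sphere_pos by (intro continuous_intros continuous_on_subset[OF cont]) (auto dest: sphere_pos)
    show "(\<lambda>x. x /\<^sub>R norm x) ` {x. p x = 1} \<subseteq> sphere 0 1"
      using nonzero by auto
    show "(\<lambda>y. y /\<^sub>R p y) ` sphere 0 1 \<subseteq> {x. p x = 1}"
    proof (rule image_subsetI)
      fix y :: 'a assume "y \<in> sphere 0 1"
      then show "y /\<^sub>R p y \<in> {x. p x = 1}" using sphere_pos[of y] by (simp add: homogeneous)
    qed
    show "(x /\<^sub>R norm x) /\<^sub>R p (x /\<^sub>R norm x) = x" if "x \<in> {x. p x = 1}" for x
      using that nonzero[of x] by (simp add: homogeneous)
    show "(y /\<^sub>R p y) /\<^sub>R norm (y /\<^sub>R p y) = y" if "y \<in> sphere 0 1" for y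
      using that sphere_pos[OF that] by simp
  qed
  then show ?thesis unfolding homeomorphic_def by blast
qed

definition l1_norm :: "real ^ 'n \<Rightarrow> real" where
  "l1_norm x = (\<Sum>i\<in>UNIV. \<bar>x $ i\<bar>)"

lemma l1_sphere_homeomorphic_sphere:
  "{x::real ^ 'n. l1_norm x = 1} homeomorphic sphere (0::real ^ 'n) 1"
proof (rule level_set_homeomorphic_sphere)
  show "continuous_on UNIV (l1_norm :: real ^ 'n \<Rightarrow> real)"
    unfolding l1_norm_def by (intro continuous_intros)
  show "l1_norm (c *\<^sub>R x) = c * l1_norm x" if "0 \<le> c" for c and x :: "real ^ 'n"
    using that by (simp add: l1_norm_def sum_distrib_left abs_mult)
  show "0 < l1_norm x" if "x \<noteq> 0" for x :: "real ^ 'n"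
  proof -
    obtain i where "x $ i \<noteq> 0" using \<open>x \<noteq> 0\<close> by (auto simp: vec_eq_iff)
    moreover have "\<bar>x $ i\<bar> \<le> l1_norm x" unfolding l1_norm_def by (rule member_le_sum) auto
    ultimately show ?thesis by linarith
  qed
qed

text \<open>Vertex \<open>j < n\<close> stands for the unit vector \<open>e\<^sub>j\<close> and vertex \<open>n + j\<close> for \<open>-e\<^sub>j\<close>.\<close>

definition cross_polytope :: "nat \<Rightarrow> nat set set" where
  "cross_polytope n = {\<tau>. \<tau> \<noteq> {} \<and> \<tau> \<subseteq> {..<n+n} \<and> (\<forall>j<n. \<not> (j \<in> \<tau> \<and> n + j \<in> \<tau>))}"

lemma simplicial_complex_cross_polytope: "simplicial_complex (cross_polytope n)"
proof -
  have "cross_polytope n \<subseteq> Pow {..<n+n}" by (auto simp: cross_polytope_def)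
  then have "finite (cross_polytope n)" by (rule finite_subset) simp
  moreover have "finite \<tau>" if "\<tau> \<in> cross_polytope n" for \<tau>
    using that by (auto simp: cross_polytope_def intro: finite_subset)
  ultimately show ?thesis by (auto simp: simplicial_complex_def cross_polytope_def)
qed

lemma vertices_cross_polytope: "vertices (cross_polytope n) = {..<n+n}"
proof
  show "{..<n+n} \<subseteq> vertices (cross_polytope n)"
  proof
    fix v assume "v \<in> {..<n+n}"
    then have "{v} \<in> cross_polytope n" by (auto simp: cross_polytope_def)
    then show "v \<in> vertices (cross_polytope n)" by (auto simp: vertices_def)
  qed
qed (auto simp: vertices_def cross_polytope_def)

lemma card_cross_polytope_face:
  assumes "\<tau> \<in> cross_polytope n"
  shows "card \<tau> \<le> n"
proof -
  have \<tau>: "\<tau> \<subseteq> {..<n+n}" "\<And>j. j < n \<Longrightarrow> \<not> (j \<in> \<tau> \<and> n + j \<in> \<tau>)"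
    using assms by (auto simp: cross_polytope_def)
  define h where "h v = (if v < n then v else v - n)" for v
  have "inj_on h \<tau>"
  proof (rule inj_onI)
    fix u v assume uv: "u \<in> \<tau>" "v \<in> \<tau>" "h u = h v"
    show "u = v"
    proof (cases "u < n \<longleftrightarrow> v < n")
      case False
      then have "u = n + v \<or> v = n + u" using uv(3) by (auto simp: h_def split: if_splits)
      then show ?thesis using uv(1,2) \<tau> False by auto
    qed (use uv(3) in \<open>auto simp: h_def split: if_splits\<close>)
  qed
  moreover have "h ` \<tau> \<subseteq> {..<n}"
    using \<tau>(1) by (auto simp: h_def)
  ultimately show ?thesis
    by (metis card_image card_lessThan card_mono finite_lessThan)
qed

lemma sum_lessThan_double:
  "(\<Sum>v<n+n::nat. g v) = (\<Sum>j<n. g j + g (n + j) :: 'a::comm_monoid_add)"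
proof -
  have "(\<Sum>v<n+n. g v) = (\<Sum>v\<in>{0..<n}. g v) + (\<Sum>v\<in>{n..<n+n}. g v)"
    by (simp add: sum.atLeastLessThan_concat atLeast0LessThan[symmetric])
  also have "(\<Sum>v\<in>{n..<n+n}. g v) = (\<Sum>j\<in>{0..<n}. g (j + n))"
    using sum.shift_bounds_nat_ivl[of g 0 n n] by simp
  finally show ?thesis by (simp add: atLeast0LessThan sum.distrib add.commute)
qed

lemma mem_realization_cross_polytope:
  "f \<in> realization (cross_polytope n) \<longleftrightarrow>
     (\<forall>v. 0 \<le> f v) \<and> (\<forall>v\<ge>n+n. f v = 0) \<and> (\<forall>j<n. f j = 0 \<or> f (n + j) = 0) \<and>
     (\<Sum>v<n+n. f v) = 1"
  (is "_ \<longleftrightarrow> ?nonneg \<and> ?support \<and> ?antipodal \<and> ?sum")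
proof
  assume "f \<in> realization (cross_polytope n)"
  then obtain \<tau> where \<tau>: "\<tau> \<in> cross_polytope n" and f: "\<forall>v. 0 \<le> f v" "\<forall>v. v \<notin> \<tau> \<longrightarrow> f v = 0" "sum f \<tau> = 1"
    by (auto simp: realization_def)
  have "sum f \<tau> = (\<Sum>v<n+n. f v)"
    using \<tau> f by (intro sum.mono_neutral_left) (auto simp: cross_polytope_def)
  then show "?nonneg \<and> ?support \<and> ?antipodal \<and> ?sum"
    using \<tau> f by (auto simp: cross_polytope_def)
next
  assume f: "?nonneg \<and> ?support \<and> ?antipodal \<and> ?sum"
  define \<tau> where "\<tau> = {v. v < n + n \<and> f v \<noteq> 0}"
  have zero: "\<forall>v. v \<notin> \<tau> \<longrightarrow> f v = 0"
    using f by (auto simp: \<tau>_def not_less)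
  have "sum f \<tau> = (\<Sum>v<n+n. f v)"
    using zero by (intro sum.mono_neutral_left) (auto simp: \<tau>_def)
  then have "sum f \<tau> = 1" using f by simp
  then have "\<tau> \<noteq> {}" by auto
  then have "\<tau> \<in> cross_polytope n"
    using f by (auto simp: cross_polytope_def \<tau>_def)
  then show "f \<in> realization (cross_polytope n)"
    unfolding realization_def using f zero \<open>sum f \<tau> = 1\<close> by blast
qed

context
  fixes n :: nat and e :: "'n::finite \<Rightarrow> nat"
  assumes e: "bij_betw e UNIV {..<n}"
begin

definition signed_coordinates :: "(nat \<Rightarrow> real) \<Rightarrow> real ^ 'n" where
  "signed_coordinates f = (\<chi> i. f (e i) - f (n + e i))"

definition split_coordinates :: "real ^ 'n \<Rightarrow> nat \<Rightarrow> real" where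
  "split_coordinates x v = (if v < n then max 0 (x $ inv_into UNIV e v)
     else if v < n + n then max 0 (- x $ inv_into UNIV e (v - n)) else 0)"

lemma index_less: "e i < n"
  and inv_index: "inv_into UNIV e (e i) = i"
  using e by (auto simp: bij_betw_def)

lemma index_inv: "j < n \<Longrightarrow> e (inv_into UNIV e j) = j"
  using e by (simp add: bij_betw_inv_into_right)

lemma sum_reindex: "(\<Sum>i\<in>UNIV. h (e i)) = (\<Sum>j<n. h j :: real)"
  using sum.reindex_bij_betw[OF e] by blast

lemma l1_norm_signed_coordinates:
  assumes "f \<in> realization (cross_polytope n)"
  shows "l1_norm (signed_coordinates f) = 1"
proof -
  have f: "\<forall>v. 0 \<le> f v" "\<forall>j<n. f j = 0 \<or> f (n + j) = 0" "(\<Sum>v<n+n. f v) = 1"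
    using assms by (simp_all add: mem_realization_cross_polytope)
  have "\<bar>f (e i) - f (n + e i)\<bar> = f (e i) + f (n + e i)" for i
    using f(1) f(2)[rule_format, OF index_less[of i]] by auto
  then have "l1_norm (signed_coordinates f) = (\<Sum>i\<in>UNIV. f (e i) + f (n + e i))"
    by (simp add: l1_norm_def signed_coordinates_def)
  also have "\<dots> = 1"
    using f(3) sum_reindex[of "\<lambda>j. f j + f (n + j)"] by (simp add: sum_lessThan_double)
  finally show ?thesis .
qed

lemma split_signed_coordinates:
  assumes "f \<in> realization (cross_polytope n)"
  shows "split_coordinates (signed_coordinates f) = f"
proof
  fix v
  have f: "\<forall>v. 0 \<le> f v" "\<forall>v\<ge>n+n. f v = 0" "\<forall>j<n. f j = 0 \<or> f (n + j) = 0"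
    using assms by (simp_all add: mem_realization_cross_polytope)
  consider "v < n" | "n \<le> v" "v < n + n" | "n + n \<le> v" by linarith
  then show "split_coordinates (signed_coordinates f) v = f v"
  proof cases
    case 1
    then show ?thesis using f(1) f(3)[rule_format, OF 1]
      by (auto simp: signed_coordinates_def split_coordinates_def index_inv)
  next
    case 2
    then obtain j where "j < n" "v = n + j" by (metis add_less_cancel_left le_Suc_ex)
    then show ?thesis using f(1) f(3)[rule_format, of j]
      by (auto simp: signed_coordinates_def split_coordinates_def index_inv)
  qed (use f(2) in \<open>auto simp: split_coordinates_def\<close>)
qed

lemma signed_split_coordinates: "signed_coordinates (split_coordinates x) = x"
  by (simp add: signed_coordinates_def split_coordinates_def vec_eq_iff index_less inv_index max_def)

lemma split_coordinates_mem_realization: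
  assumes "l1_norm x = 1"
  shows "split_coordinates x \<in> realization (cross_polytope n)"
proof -
  have "(\<Sum>v<n+n. split_coordinates x v) = (\<Sum>j<n. \<bar>x $ inv_into UNIV e j\<bar>)"
    by (simp add: sum_lessThan_double) (auto simp: split_coordinates_def intro: sum.cong)
  also have "\<dots> = 1" using assms by (simp add: sum_reindex[symmetric] inv_index l1_norm_def)
  finally show ?thesis
    by (auto simp: mem_realization_cross_polytope split_coordinates_def)
qed

lemma continuous_on_signed_coordinates: "continuous_on S signed_coordinates"
  unfolding signed_coordinates_def[abs_def] by (intro continuous_intros)

lemma continuous_on_split_coordinates: "continuous_on S split_coordinates"
proof (rule continuous_on_coordinatewise_then_product)
  fix v show "continuous_on S (\<lambda>x. split_coordinates x v)"
    by (cases "v < n"; cases "v < n + n") (auto simp: split_coordinates_def intro!: continuous_intros)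
qed

end

lemma cross_polytope_homeomorphic_l1_sphere:
  assumes "CARD('n::finite) = n"
  shows "realization (cross_polytope n) homeomorphic {x::real ^ 'n. l1_norm x = 1}"
proof -
  obtain e where e: "bij_betw e (UNIV::'n set) {..<n}"
    using ex_bij_betw_finite_nat[of "UNIV::'n set"] assms by (auto simp: atLeast0LessThan)
  have "homeomorphism (realization (cross_polytope n)) {x. l1_norm x = 1}
          (signed_coordinates n e) (split_coordinates n e)"
    by (rule homeomorphismI)
      (use e in \<open>auto simp: l1_norm_signed_coordinates split_signed_coordinates signed_split_coordinates
        split_coordinates_mem_realization continuous_on_signed_coordinates continuous_on_split_coordinates\<close>)
  then show ?thesis unfolding homeomorphic_def by blast
qed

section \<open>A chain of stellar subdivisions\<close>

definition chain_facet :: "nat \<Rightarrow> nat \<Rightarrow> nat set" where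
  "chain_facet n j = {n+j..<n+n+j}"

fun stacked :: "nat \<Rightarrow> nat \<Rightarrow> nat set set" where
  "stacked n 0 = cross_polytope n"
| "stacked n (Suc m) = stellar_subdivision (stacked n m) (chain_facet n m) (n+n+m)"

lemma mem_stacked:
  "\<tau> \<in> stacked n m \<longleftrightarrow>
     (\<tau> \<in> cross_polytope n \<or> (\<exists>j<m. \<exists>\<rho>\<subset>chain_facet n j. \<tau> = insert (n+n+j) \<rho>)) \<and>
     (\<forall>j<m. \<tau> \<noteq> chain_facet n j)"
proof (induction m arbitrary: \<tau>)
  case (Suc m)
  have new: "insert (n+n+m) \<rho> \<noteq> chain_facet n j" if "j \<le> m" for \<rho> j
  proof
    assume "insert (n+n+m) \<rho> = chain_facet n j"
    then have "n+n+m \<in> chain_facet n j" by blast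
    with that show False by (simp add: chain_facet_def)
  qed
  show ?case
    unfolding stacked.simps mem_stellar_subdivision Suc.IH less_Suc_eq
    using new[OF less_imp_le] new[OF le_refl] by blast
qed simp

lemma stacked_face_window:
  assumes "\<tau> \<in> stacked n m"
  shows "\<tau> \<subseteq> {..<n+n} \<or> (\<exists>a. \<tau> \<subseteq> {a..a+n})"
proof -
  have "\<tau> \<in> cross_polytope n \<or> (\<exists>j \<rho>. \<rho> \<subset> chain_facet n j \<and> \<tau> = insert (n+n+j) \<rho>)"
    using assms by (auto simp: mem_stacked)
  then show ?thesis
  proof (elim disjE exE conjE)
    fix j \<rho> assume "\<rho> \<subset> chain_facet n j" "\<tau> = insert (n+n+j) \<rho>"
    then have "\<tau> \<subseteq> {n+j..n+j+n}" by (auto simp: chain_facet_def)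
    then show ?thesis by blast
  qed (auto simp: cross_polytope_def)
qed

lemma finite_stacked_face: "\<tau> \<in> stacked n m \<Longrightarrow> finite \<tau>"
  using stacked_face_window by (meson finite_atLeastAtMost finite_lessThan finite_subset)

lemma card_stacked_face:
  assumes "\<tau> \<in> stacked n m"
  shows "card \<tau> \<le> n"
proof -
  have "\<tau> \<in> cross_polytope n \<or> (\<exists>j \<rho>. \<rho> \<subset> chain_facet n j \<and> \<tau> = insert (n+n+j) \<rho>)"
    using assms by (auto simp: mem_stacked)
  then show ?thesis
  proof (elim disjE exE conjE)
    fix j \<rho> assume \<rho>: "\<rho> \<subset> chain_facet n j" and "\<tau> = insert (n+n+j) \<rho>"
    then have "card \<tau> \<le> Suc (card \<rho>)" by (simp add: card_insert_le_m1)
    moreover have "card \<rho> < card (chain_facet n j)"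
      using \<rho> by (intro psubset_card_mono) (simp_all add: chain_facet_def)
    ultimately show ?thesis by (simp add: chain_facet_def)
  qed (rule card_cross_polytope_face)
qed

lemma chain_facet_mem_stacked:
  assumes "0 < n"
  shows "chain_facet n m \<in> stacked n m"
proof (cases m)
  case 0
  then show ?thesis using assms by (auto simp: chain_facet_def cross_polytope_def)
next
  case (Suc j)
  have "chain_facet n (Suc j) = insert (n+n+j) (chain_facet n j - {n+j})"
    unfolding chain_facet_def using assms by (intro set_eqI) auto
  moreover have "chain_facet n j - {n+j} \<subset> chain_facet n j"
  proof -
    have "n+j \<in> chain_facet n j" using assms by (simp add: chain_facet_def)
    then show ?thesis by blast
  qed
  moreover have "chain_facet n (Suc j) \<noteq> chain_facet n i" if "i < Suc j" for i
  proof -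
    have "n+n+j \<in> chain_facet n (Suc j)" "n+n+j \<notin> chain_facet n i"
      using that assms by (auto simp: chain_facet_def)
    then show ?thesis by blast
  qed
  ultimately show ?thesis
    unfolding Suc mem_stacked by blast
qed

lemma chain_facet_not_mem_stacked: "j < m \<Longrightarrow> chain_facet n j \<notin> stacked n m"
  unfolding mem_stacked by blast

lemma is_facet_chain_facet:
  assumes "0 < n"
  shows "is_facet (stacked n m) (chain_facet n m)"
  unfolding is_facet_def
proof (intro conjI ballI impI)
  fix \<tau> assume \<tau>: "\<tau> \<in> stacked n m" "chain_facet n m \<subseteq> \<tau>"
  have "card \<tau> \<le> card (chain_facet n m)"
    using card_stacked_face[OF \<tau>(1)] by (simp add: chain_facet_def)
  then show "\<tau> = chain_facet n m"
    using card_seteq[OF finite_stacked_face[OF \<tau>(1)] \<tau>(2)] by simp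
qed (rule chain_facet_mem_stacked[OF assms])

lemma simplicial_complex_stacked:
  assumes "0 < n"
  shows "simplicial_complex (stacked n m)"
  by (induction m) (simp_all add: simplicial_complex_cross_polytope
      simplicial_complex_stellar_subdivision is_facet_chain_facet assms)

lemma vertices_stacked:
  assumes "2 \<le> n"
  shows "vertices (stacked n m) = {..<n+n+m}"
proof (induction m)
  case (Suc m)
  have "2 \<le> card (chain_facet n m)" using assms by (simp add: chain_facet_def)
  then show ?case
    using Suc assms chain_facet_mem_stacked[of n m]
    by (simp add: vertices_stellar_subdivision lessThan_Suc)
qed (simp add: vertices_cross_polytope)

lemma realization_stacked_homeomorphic:
  assumes "2 \<le> n"
  shows "realization (stacked n m) homeomorphic realization (cross_polytope n)"
proof (induction m)
  case (Suc m)
  have "realization (stacked n (Suc m)) homeomorphic realization (stacked n m)"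
    using assms vertices_stacked[OF assms, of m]
    by (simp add: realization_stellar_subdivision_homeomorphic simplicial_complex_stacked
        is_facet_chain_facet)
  then show ?case using Suc homeomorphic_trans by blast
qed (simp add: homeomorphic_refl)

lemma triangulates_sphere_stacked:
  assumes "CARD('n::finite) = n" "2 \<le> n"
  shows "triangulates_sphere (stacked n m) TYPE('n)"
proof -
  have "realization (stacked n m) homeomorphic {x::real ^ 'n. l1_norm x = 1}"
    using realization_stacked_homeomorphic[OF assms(2)]
      cross_polytope_homeomorphic_l1_sphere[OF assms(1)] homeomorphic_trans by blast
  then show ?thesis
    using l1_sphere_homeomorphic_sphere homeomorphic_trans assms(2)
    by (auto simp: triangulates_sphere_def simplicial_complex_stacked)
qed

section \<open>Degree bounds\<close>

lemma Delta_ij_le_neighbourhood: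
  assumes "finite X"
    and local: "\<And>\<tau> v. \<tau> \<in> X \<Longrightarrow> v \<in> \<tau> \<Longrightarrow> \<tau> \<subseteq> insert v (N v)"
    and N: "\<And>v. finite (N v)" "\<And>v. card (N v) \<le> b"
  shows "Delta_ij 0 1 X \<le> b" and "Delta_ij i j X \<le> 2 ^ Suc b"
proof -
  have finite_skel: "finite (skel k X)" for k
    using \<open>finite X\<close> by (simp add: skel_def)
  have edges: "card {\<tau> \<in> skel 1 X. {v} \<subseteq> \<tau>} \<le> b" for v
  proof -
    have "{\<tau> \<in> skel 1 X. {v} \<subseteq> \<tau>} \<subseteq> (\<lambda>u. {v, u}) ` N v"
    proof
      fix \<tau> assume "\<tau> \<in> {\<tau> \<in> skel 1 X. {v} \<subseteq> \<tau>}"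
      then have \<tau>: "\<tau> \<in> X" "card \<tau> = 2" "v \<in> \<tau>" by (auto simp: skel_def)
      then have "card (\<tau> - {v}) = 1" by (simp add: card_Diff_singleton)
      then obtain u where "\<tau> - {v} = {u}" by (auto simp: card_1_singleton_iff)
      then have "\<tau> = {v, u}" "u \<in> N v" using \<tau>(3) local[OF \<tau>(1,3)] by auto
      then show "\<tau> \<in> (\<lambda>u. {v, u}) ` N v" by blast
    qed
    then have "card {\<tau> \<in> skel 1 X. {v} \<subseteq> \<tau>} \<le> card ((\<lambda>u. {v, u}) ` N v)"
      using N(1) by (intro card_mono) auto
    also have "\<dots> \<le> b" using N by (meson card_image_le le_trans)
    finally show ?thesis .
  qed
  have "card {\<tau> \<in> skel 1 X. \<sigma> \<subseteq> \<tau>} \<le> b" if "\<sigma> \<in> skel 0 X" for \<sigma>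
  proof -
    have "card \<sigma> = 1" using that by (simp add: skel_def)
    then obtain v where "\<sigma> = {v}" by (auto simp: card_Suc_eq)
    then show ?thesis using edges by simp
  qed
  then show "Delta_ij 0 1 X \<le> b"
    unfolding Delta_ij_def using finite_skel by (auto simp: Max_le_iff)
  have "card {\<tau> \<in> skel j X. \<sigma> \<subseteq> \<tau>} \<le> 2 ^ Suc b" if \<sigma>: "\<sigma> \<in> skel i X" for \<sigma>
  proof -
    obtain v where "v \<in> \<sigma>" using \<sigma> by (fastforce simp: skel_def)
    then have "{\<tau> \<in> skel j X. \<sigma> \<subseteq> \<tau>} \<subseteq> Pow (insert v (N v))"
      using local by (auto simp: skel_def)
    then have "card {\<tau> \<in> skel j X. \<sigma> \<subseteq> \<tau>} \<le> 2 ^ card (insert v (N v))"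
      using N(1) by (metis card_Pow card_mono finite_Pow_iff finite_insert)
    also have "\<dots> \<le> 2 ^ Suc b"
      using N(1) N(2)[of v] by (intro power_increasing) (simp_all add: card_insert_if)
    finally show ?thesis .
  qed
  then show "Delta_ij i j X \<le> 2 ^ Suc b"
    unfolding Delta_ij_def using finite_skel by (auto simp: Max_le_iff)
qed

lemma Delta_le_neighbourhood:
  assumes "finite X"
    and "\<And>\<tau> v. \<tau> \<in> X \<Longrightarrow> v \<in> \<tau> \<Longrightarrow> \<tau> \<subseteq> insert v (N v)"
    and "\<And>v. finite (N v)" "\<And>v. card (N v) \<le> b"
  shows "Delta X \<le> 2 ^ Suc b"
  using Delta_ij_le_neighbourhood(2)[OF assms] by (auto simp: Delta_def Max_le_iff)

definition window_neighbourhood :: "nat \<Rightarrow> nat \<Rightarrow> nat set" where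
  "window_neighbourhood n v = ({..<n+n} \<union> {v-n..v+n}) - {v}"

lemma card_window_neighbourhood: "card (window_neighbourhood n v) \<le> 4 * n"
proof -
  have "window_neighbourhood n v \<subseteq> {..<n+n} \<union> ({v-n..v+n} - {v})"
    by (auto simp: window_neighbourhood_def)
  then have "card (window_neighbourhood n v) \<le> card {..<n+n} + card ({v-n..v+n} - {v})"
    by (meson card_Un_le card_mono finite_Diff finite_UnI finite_atLeastAtMost finite_lessThan le_trans)
  also have "card ({v-n..v+n} - {v}) \<le> 2 * n"
    by (simp add: card_Diff_singleton_if)
  finally show ?thesis by simp
qed

lemma stacked_face_subset_window_neighbourhood:
  assumes "\<tau> \<in> stacked n m" "v \<in> \<tau>"
  shows "\<tau> \<subseteq> insert v (window_neighbourhood n v)"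
  using stacked_face_window[OF assms(1)]
proof (elim disjE exE)
  fix a assume a: "\<tau> \<subseteq> {a..a+n}"
  have "\<tau> \<subseteq> {v-n..v+n}"
  proof
    fix u assume "u \<in> \<tau>"
    then have "a \<le> u" "u \<le> a+n" "a \<le> v" "v \<le> a+n" using a assms(2) by auto
    then show "u \<in> {v-n..v+n}" by simp
  qed
  then show ?thesis by (auto simp: window_neighbourhood_def)
qed (auto simp: window_neighbourhood_def)

lemma finite_window_neighbourhood: "finite (window_neighbourhood n v)"
  by (simp add: window_neighbourhood_def)

lemma finite_stacked: "0 < n \<Longrightarrow> finite (stacked n m)"
  using simplicial_complex_stacked by (simp add: simplicial_complex_def)

lemma Delta_ij_0_1_stacked:
  assumes "0 < n"
  shows "Delta_ij 0 1 (stacked n m) \<le> 4 * n"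
  using assms
  by (intro Delta_ij_le_neighbourhood(1)[where N = "window_neighbourhood n"])
    (simp_all add: finite_stacked stacked_face_subset_window_neighbourhood
      card_window_neighbourhood finite_window_neighbourhood)

lemma Delta_stacked:
  assumes "0 < n"
  shows "Delta (stacked n m) \<le> 2 ^ Suc (4 * n)"
  using assms
  by (intro Delta_le_neighbourhood[where N = "window_neighbourhood n"])
    (simp_all add: finite_stacked stacked_face_subset_window_neighbourhood
      card_window_neighbourhood finite_window_neighbourhood)

section \<open>Separated facets\<close>

text \<open>The facet created at step \<open>j\<close> that omits \<open>n + n + j - 1\<close>: unlike
  \<open>chain_facet n (j + 1)\<close>, which omits \<open>n + j\<close>, it is never subdivided later.\<close>

definition side_facet :: "nat \<Rightarrow> nat \<Rightarrow> nat set" where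
  "side_facet n j = insert (n+n+j) (chain_facet n j - {n+n+j-1})"

lemma card_side_facet:
  assumes "2 \<le> n"
  shows "card (side_facet n j) = n"
proof -
  have "n+n+j-1 \<in> chain_facet n j" "n+n+j \<notin> chain_facet n j"
    using assms by (auto simp: chain_facet_def)
  then show ?thesis
    using assms by (simp add: side_facet_def card_Diff_singleton) (simp add: chain_facet_def)
qed

lemma side_facet_subset: "side_facet n j \<subseteq> {n+j..n+n+j}"
  by (auto simp: side_facet_def chain_facet_def)

lemma side_facet_mem_stacked:
  assumes "2 \<le> n" "j < m"
  shows "side_facet n j \<in> stacked n m"
  unfolding mem_stacked
proof (intro conjI disjI2 allI impI)
  have "n+n+j-1 \<in> chain_facet n j" using assms by (simp add: chain_facet_def)
  then have "chain_facet n j - {n+n+j-1} \<subset> chain_facet n j" by blast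
  then show "\<exists>i<m. \<exists>\<rho>\<subset>chain_facet n i. side_facet n j = insert (n+n+i) \<rho>"
    using assms(2) unfolding side_facet_def by blast
  fix i assume "i < m"
  show "side_facet n j \<noteq> chain_facet n i"
  proof (cases "i \<le> j")
    case True
    have "n+n+j \<in> side_facet n j" "n+n+j \<notin> chain_facet n i"
      using True by (auto simp: side_facet_def chain_facet_def)
    then show ?thesis by blast
  next
    case False
    have "n+j \<in> side_facet n j" "n+j \<notin> chain_facet n i"
      using False assms(1) by (auto simp: side_facet_def chain_facet_def)
    then show ?thesis by blast
  qed
qed

lemma has_separated_facetsI:
  assumes "\<And>i. i < k \<Longrightarrow> t i \<in> skel d X"
    and far: "\<And>i j u v. i < j \<Longrightarrow> j < k \<Longrightarrow> u \<in> t i \<Longrightarrow> v \<in> t j \<Longrightarrow> u < v \<and> {u, v} \<notin> X"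
  shows "has_separated_facets X d k"
proof -
  have ordered: "t i \<inter> t j = {} \<and> nonadjacent X (t i) (t j) \<and> nonadjacent X (t j) (t i)"
    if "i < j" "j < k" for i j
    using far[OF that] by (fastforce simp: nonadjacent_def skel_def insert_commute)
  have "t i \<inter> t j = {} \<and> nonadjacent X (t i) (t j)" if "i < k" "j < k" "i \<noteq> j" for i j
    using that ordered[of i j] ordered[of j i] by (cases "i < j") auto
  then show ?thesis
    using assms(1) unfolding has_separated_facets_def by blast
qed

lemma stacked_side_facets_far_apart:
  assumes "j + (2*n + 1) \<le> j'" "u \<in> side_facet n j" "v \<in> side_facet n j'"
  shows "u < v \<and> {u, v} \<notin> stacked n m"
proof -
  have "u \<le> n+n+j" "n+j' \<le> v"
    using assms(2,3) side_facet_subset by fastforce+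
  then have "u < v" "n < v - u" "n + n \<le> v" using assms(1) by linarith+
  moreover have "\<not> {u, v} \<subseteq> {a..a+n}" for a
    using \<open>n < v - u\<close> by auto
  ultimately show ?thesis
    using stacked_face_window[of "{u, v}" n m] by auto
qed

text \<open>For \<open>n = 2\<close> the subdivided facets are edges: \<open>side_facet 2 j = {j+2, j+4}\<close>, and
  the edge \<open>{j+4, j+5} = chain_facet 2 (j+2)\<close> between consecutive chosen facets is gone.\<close>

lemma stacked_side_facets_circle:
  assumes "i < i'" "3*i + 2 < m" "u \<in> side_facet 2 (3*i)" "v \<in> side_facet 2 (3*i')"
  shows "u < v \<and> {u, v} \<notin> stacked 2 m"
proof -
  have side: "side_facet 2 j = {j+2, j+4}" for j
    unfolding side_facet_def chain_facet_def by (intro set_eqI) auto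
  then have u: "u = 3*i+2 \<or> u = 3*i+4" and v: "v = 3*i'+2 \<or> v = 3*i'+4"
    using assms(3,4) by auto
  then have "u < v" using assms(1) by linarith
  moreover have "{u, v} \<notin> stacked 2 m"
  proof
    assume uv: "{u, v} \<in> stacked 2 m"
    have "\<not> {u, v} \<subseteq> {..<2+2}" using v assms(1) by auto
    then obtain a where "{u, v} \<subseteq> {a..a+2}" using stacked_face_window[OF uv] by blast
    then have "v \<le> u + 2" by auto
    then have "u = 3*i+4" "v = 3*i+5" using u v assms(1) by presburger+
    then have "{u, v} = chain_facet 2 (3*i+2)"
      unfolding chain_facet_def by (intro set_eqI) auto
    then show False using uv chain_facet_not_mem_stacked[OF assms(2)] by simp
  qed
  ultimately show ?thesis by blast
qed

lemma has_separated_facets_stacked: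
  assumes "1 \<le> d" and m: "(d^2 + d + 1) * k < m"
  shows "has_separated_facets (stacked (d+1) m) d k"
proof -
  define s where "s = d^2 + d + 1"
  have mem: "side_facet (d+1) (s*i) \<in> skel d (stacked (d+1) m)" if "i < k" for i
  proof -
    have "s*i \<le> s*k" using that by simp
    then have "s*i < m" using m by (simp add: s_def)
    then show ?thesis
      using assms(1) by (simp add: skel_def side_facet_mem_stacked card_side_facet)
  qed
  have far: "u < v \<and> {u, v} \<notin> stacked (d+1) m"
    if ij: "i < j" "j < k" and uv: "u \<in> side_facet (d+1) (s*i)" "v \<in> side_facet (d+1) (s*j)"
    for i j u v
  proof (cases "d = 1")
    case True
    then have d: "d + 1 = 2" and "s = 3" by (simp_all add: s_def)
    then have "u \<in> side_facet 2 (3*i)" "v \<in> side_facet 2 (3*j)" using uv by (simp_all only:)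
    moreover have "3*i + 2 < m" using m ij True by simp
    ultimately have "u < v \<and> {u, v} \<notin> stacked 2 m" by (intro stacked_side_facets_circle[OF ij(1)])
    then show ?thesis unfolding d .
  next
    case False
    then have "2 \<le> d" using assms(1) by simp
    then have "d*2 \<le> d*d" by (rule mult_le_mono2)
    then have "d + 2 \<le> d*d" using \<open>2 \<le> d\<close> by linarith
    then have "2*(d+1) + 1 \<le> s" unfolding s_def power2_eq_square by simp
    moreover have "s*i + s \<le> s*j" using ij(1) by (metis mult_Suc_right Suc_leI mult_le_mono2 add.commute)
    ultimately have "s*i + (2*(d+1) + 1) \<le> s*j" by linarith
    then show ?thesis using stacked_side_facets_far_apart uv by blast
  qed
  show ?thesis
    by (rule has_separated_facetsI[OF mem far])
qed

theorem lemma9: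
  fixes d :: nat
  assumes "CARD('n::finite) = d + 1" and "d \<ge> 1"
  shows "(\<forall>k\<ge>1. \<exists>T. triangulates_sphere T TYPE('n) \<and>
            Delta_ij 0 1 T \<le> (d + 1) * (d^2 + d + 2) \<and>
            card (vertices T) = (d^2 + d + 1) * k + (d + 2)^2 \<and>
            has_separated_facets T d k)
       \<and> (\<exists>L::nat. \<forall>k\<ge>1. \<exists>T. triangulates_sphere T TYPE('n) \<and>
            Delta T \<le> L \<and> card (vertices T) \<le> L * k \<and>
            has_separated_facets T d k)"
proof -
  define n where "n = d + 1"
  define s where "s = d^2 + d + 1"
  define T where "T k = stacked n (s * k + (d^2 + 2*d + 2))" for k
  have n: "CARD('n) = n" "2 \<le> n" using assms by (simp_all add: n_def)
  have sphere: "triangulates_sphere (T k) TYPE('n)" for k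
    unfolding T_def by (rule triangulates_sphere_stacked[OF n])
  have separated: "has_separated_facets (T k) d k" for k
    unfolding T_def n_def by (rule has_separated_facets_stacked[OF assms(2)]) (simp add: s_def)
  have card: "card (vertices (T k)) = s * k + (d + 2)^2" for k
    unfolding T_def vertices_stacked[OF n(2)] by (simp add: n_def power2_eq_square)
  have degree: "Delta_ij 0 1 (T k) \<le> (d + 1) * (d^2 + d + 2)" for k
  proof -
    have "Delta_ij 0 1 (T k) \<le> 4 * n" unfolding T_def using n(2) by (intro Delta_ij_0_1_stacked) simp
    also have "\<dots> \<le> (d + 1) * (d^2 + d + 2)"
    proof -
      have "1 \<le> d * d" using mult_le_mono[OF assms(2) assms(2)] by simp
      then have "4 \<le> d^2 + d + 2" using assms(2) unfolding power2_eq_square by linarith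
      then have "(d + 1) * 4 \<le> (d + 1) * (d^2 + d + 2)" by (rule mult_le_mono2)
      then show ?thesis by (simp only: n_def mult.commute)
    qed
    finally show ?thesis .
  qed
  define L where "L = max (2 ^ Suc (4 * n)) (s + (d + 2)^2)"
  have "Delta (T k) \<le> L" for k
  proof -
    have "Delta (T k) \<le> 2 ^ Suc (4 * n)" unfolding T_def using n(2) by (intro Delta_stacked) simp
    then show ?thesis by (simp add: L_def)
  qed
  moreover have "card (vertices (T k)) \<le> L * k" if "1 \<le> k" for k
  proof -
    have "s * k + (d + 2)^2 \<le> (s + (d + 2)^2) * k" using that by (simp add: algebra_simps)
    also have "\<dots> \<le> L * k" by (simp add: L_def)
    finally show ?thesis by (simp add: card)
  qed
  ultimately show ?thesis using sphere separated card degree unfolding s_def by blast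
qed

end
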